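(* Let $G$ be a countable multiplicatively written Abelian group with identity $e$, let $\phi$ be a height on $G$, fix $\alpha\in G$, and let $I\subseteq(0,\infty)$ be an open interval (possibly unbounded) such that for every $t\in I$ the infimum in the definition of $\phi_t(\alpha)$ is attained. Then the following conditions are equivalent: (i) There exists a finite set $\mathcal X\subseteq\mathbb R^\infty$ such that $\phi_t(\alpha)=\min\{\|\mathbf x\|_t:\mathbf x\in\mathcal X\}$ for all $t\in I$. (ii) $I$ contains only finitely many exceptional points. (iii) There exists a finite set $R\subseteq G$ (containing $e$) that replaces $G$ uniformly on $I$. (iv) There exists a set $S\subseteq G$ (containing $e$) with $\phi(S)$ finite that replaces $G$ uniformly on $I$.
   Context: A height on an Abelian group $G$ is a map $\phi:G\to[0,\infty)$ with $\phi(e)=0$ and $\phi(\beta)=\phi(\beta^{-1})$ for all $\beta\in G$. For $S\subseteq G$ containing $e$, $S^\infty$ is the set of sequences $(\alpha_1,\alpha_2,\ldots)$ with all $\alpha_n\in S$ and $\alpha_n=e$ for all but finitely many $n$; $\tau_G(\alpha_1,\alpha_2,\ldots)=\prod_n\alpha_n$. $\mathbb R^\infty$ is the set of real sequences with finitely many nonzero entries, with $\|\mathbf x\|_t=(\sum_n|x_n|^t)^{1/t}$ for $t\in(0,\infty)$. The $t$-metric version of $\phi$ is $\phi_t(\alpha)=\inf\{\|(\phi(\alpha_1),\phi(\alpha_2),\ldots)\|_t:(\alpha_1,\alpha_2,\ldots)\in G^\infty,\ \tau_G(\alpha_1,\alpha_2,\ldots)=\alpha\}$; "the infimum is attained" means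 some such sequence achieves it. A set $S\ni e$ replaces $G$ at $t$ if $\phi_t(\alpha)$ equals the same infimum taken only over sequences in $S^\infty$ with product $\alpha$; $S$ replaces $G$ uniformly on $I$ if it replaces $G$ at every $t\in I$. A subset $K\subseteq I$ is uniform if there exists $\mathbf x\in\mathbb R^\infty$ with $\phi_t(\alpha)=\|\mathbf x\|_t$ for all $t\in K$. A point $t\in I$ is standard if there is a uniform open interval $J\subseteq I$ containing $t$, and exceptional otherwise. *)

theory Defs
  imports "HOL-Analysis.Analysis" "HOL-Library.Countable"
begin

text \<open>The Abelian group G is rendered as a type of class ab_group_add (written
additively: identity 0, inverse uminus, product = sum). Countability is the
type class countable.\<close>

definition height :: "('a::ab_group_add \<Rightarrow> real) \<Rightarrow> bool" where
  "height \<phi> \<longleftrightarrow> (\<forall>b. \<phi> b \<ge> 0) \<and> \<phi> 0 = 0 \<and> (\<forall>b. \<phi> b = \<phi> (- b))"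

definition fin_seqs :: "'a::zero set \<Rightarrow> (nat \<Rightarrow> 'a) set" where
  "fin_seqs S = {a. (\<forall>n. a n \<in> S) \<and> finite {n. a n \<noteq> 0}}"

definition tauG :: "(nat \<Rightarrow> 'a::comm_monoid_add) \<Rightarrow> 'a" where
  "tauG a = (\<Sum>n\<in>{n. a n \<noteq> 0}. a n)"

definition realinf :: "(nat \<Rightarrow> real) set" where
  "realinf = {x. finite {n. x n \<noteq> 0}}"

definition tnorm :: "real \<Rightarrow> (nat \<Rightarrow> real) \<Rightarrow> real" where
  "tnorm t x = (\<Sum>n\<in>{n. x n \<noteq> 0}. \<bar>x n\<bar> powr t) powr (1 / t)"

definition phi_t :: "('a::ab_group_add \<Rightarrow> real) \<Rightarrow> real \<Rightarrow> 'a \<Rightarrow> real" where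
  "phi_t \<phi> t \<alpha> = Inf {tnorm t (\<phi> \<circ> a) | a. a \<in> fin_seqs UNIV \<and> tauG a = \<alpha>}"

definition attained :: "('a::ab_group_add \<Rightarrow> real) \<Rightarrow> real \<Rightarrow> 'a \<Rightarrow> bool" where
  "attained \<phi> t \<alpha> \<longleftrightarrow>
     (\<exists>a \<in> fin_seqs UNIV. tauG a = \<alpha> \<and> tnorm t (\<phi> \<circ> a) = phi_t \<phi> t \<alpha>)"

text \<open>S replaces G at t (for the fixed element alpha). An empty infimum is +infinity,
so we require some representation of alpha over S.\<close>
definition replaces_at :: "('a::ab_group_add \<Rightarrow> real) \<Rightarrow> 'a \<Rightarrow> 'a set \<Rightarrow> real \<Rightarrow> bool" where
  "replaces_at \<phi> \<alpha> S t \<longleftrightarrow> 0 \<in> S \<and>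
     (\<exists>a \<in> fin_seqs S. tauG a = \<alpha>) \<and>
     phi_t \<phi> t \<alpha> = Inf {tnorm t (\<phi> \<circ> a) | a. a \<in> fin_seqs S \<and> tauG a = \<alpha>}"

definition replaces_unif :: "('a::ab_group_add \<Rightarrow> real) \<Rightarrow> 'a \<Rightarrow> 'a set \<Rightarrow> real set \<Rightarrow> bool" where
  "replaces_unif \<phi> \<alpha> S I \<longleftrightarrow> (\<forall>t\<in>I. replaces_at \<phi> \<alpha> S t)"

definition uniform_set :: "('a::ab_group_add \<Rightarrow> real) \<Rightarrow> 'a \<Rightarrow> real set \<Rightarrow> bool" where
  "uniform_set \<phi> \<alpha> K \<longleftrightarrow> (\<exists>x\<in>realinf. \<forall>t\<in>K. phi_t \<phi> t \<alpha> = tnorm t x)"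

definition standard_pt :: "('a::ab_group_add \<Rightarrow> real) \<Rightarrow> 'a \<Rightarrow> real set \<Rightarrow> real \<Rightarrow> bool" where
  "standard_pt \<phi> \<alpha> I t \<longleftrightarrow> t \<in> I \<and>
     (\<exists>a b. t \<in> {a<..<b} \<and> {a<..<b} \<subseteq> I \<and> uniform_set \<phi> \<alpha> {a<..<b})"

definition exceptional_pt :: "('a::ab_group_add \<Rightarrow> real) \<Rightarrow> 'a \<Rightarrow> real set \<Rightarrow> real \<Rightarrow> bool" where
  "exceptional_pt \<phi> \<alpha> I t \<longleftrightarrow> t \<in> I \<and> \<not> standard_pt \<phi> \<alpha> I t"

end

theory Submission
  imports Defs
begin

text \<open>
  With finitely many heights available, a representation of \<open>\<alpha>\<close> enters \<open>\<phi>\<^sub>t(\<alpha>)\<close> only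
  through the number of times each height occurs, and Dickson's lemma leaves finitely many
  minimal multiplicity vectors: this gives (iv) \<Longrightarrow> (i). The t-th power of a t-norm is an
  exponential sum in \<open>t\<close>, so two t-norms agree either for all \<open>t > 0\<close> or for finitely many.
  Hence a minimum of finitely many t-norms can switch between them only at finitely many points,
  which gives (i) \<Longrightarrow> (ii). Conversely, near a standard point \<open>\<phi>\<^sub>t(\<alpha>)\<close> is a single t-norm;
  since attaining representations are countable while the interval is not, some representation
  realises that t-norm everywhere. Two different such t-norms cannot both occur between
  consecutive exceptional points, so finitely many representations, together with optimal ones
  at the exceptional points, supply a finite replacing set: (ii) \<Longrightarrow> (iii).
\<close>

lemma finite_zeros_if_finite_deriv_zeros:
  fixes h h' :: "real \<Rightarrow> real"
  assumes der: "\<And>x. (h has_real_derivative h' x) (at x)"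
    and fin: "finite {x. h' x = 0}"
  shows "finite {x. h x = 0}"
proof -
  define below where "below z = {w. h' w = 0 \<and> w < z}" for z
  have "inj_on (\<lambda>z. card (below z)) {x. h x = 0}"
  proof (rule linorder_inj_onI')
    fix a b assume ab: "a \<in> {x. h x = 0}" "b \<in> {x. h x = 0}" "a < b"
    have "continuous_on {a..b} h"
      using der by (meson DERIV_isCont continuous_at_imp_continuous_on)
    moreover have "\<And>x. h differentiable at x"
      using der real_differentiable_def by blast
    ultimately obtain z where z: "a < z" "z < b" "DERIV h z :> 0"
      using Rolle[OF \<open>a < b\<close>, of h] ab by auto
    then have "z \<in> below b - below a"
      using DERIV_unique[OF der[of z]] by (auto simp: below_def)
    moreover have "below a \<subseteq> below b" "finite (below b)"
      using \<open>a < b\<close> fin by (auto simp: below_def)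
    ultimately show "card (below a) \<noteq> card (below b)"
      by (metis Diff_eq_empty_iff card_subset_eq empty_iff)
  qed
  moreover have "card (below z) \<le> card {x. h' x = 0}" for z
    using fin by (auto simp: below_def intro!: card_mono)
  ultimately show ?thesis
    by (metis (no_types, lifting) finite_atMost finite_imageD finite_subset image_subsetI atMost_iff)
qed

text \<open>Multiplying by \<open>exp (- e \<mu> * t)\<close> and differentiating removes the term of \<open>\<mu>\<close>;
  by Rolle's theorem the derivative still has infinitely many zeros.\<close>
lemma exp_sum_coeffs_zero:
  fixes c e :: "'b \<Rightarrow> real"
  assumes "finite L" "inj_on e L" "infinite {t. (\<Sum>i\<in>L. c i * exp (e i * t)) = 0}"
  shows "\<forall>i\<in>L. c i = 0"
  using assms
proof (induction L arbitrary: c e rule: finite_induct)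
  case empty
  then show ?case by simp
next
  case (insert \<mu> L)
  define h where "h t = c \<mu> + (\<Sum>i\<in>L. c i * exp ((e i - e \<mu>) * t))" for t
  define h' where "h' t = (\<Sum>i\<in>L. (c i * (e i - e \<mu>)) * exp ((e i - e \<mu>) * t))" for t
  have sum_eq: "(\<Sum>i\<in>insert \<mu> L. c i * exp (e i * t)) = exp (e \<mu> * t) * h t" for t
  proof -
    have "exp (e \<mu> * t) * h t
        = c \<mu> * exp (e \<mu> * t) + (\<Sum>i\<in>L. exp (e \<mu> * t) * (c i * exp ((e i - e \<mu>) * t)))"
      by (simp add: h_def distrib_left sum_distrib_left)
    also have "\<dots> = (\<Sum>i\<in>insert \<mu> L. c i * exp (e i * t))"
      using insert.hyps by (simp add: mult_exp_exp algebra_simps)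
    finally show ?thesis ..
  qed
  have zeros: "{t. h t = 0} = {t. (\<Sum>i\<in>insert \<mu> L. c i * exp (e i * t)) = 0}"
    unfolding sum_eq by simp
  have der: "(h has_real_derivative h' x) (at x)" for x
    unfolding h_def h'_def by (auto intro!: derivative_eq_intros simp: algebra_simps)
  have distinct: "e i \<noteq> e \<mu>" if "i \<in> L" for i
    using insert.prems(1) insert.hyps(2) that by (auto simp: inj_on_def)
  have shifted_inj: "inj_on (\<lambda>i. e i - e \<mu>) L"
    using insert.prems(1) by (simp add: inj_on_def)
  have "infinite {t. h' t = 0}"
    using finite_zeros_if_finite_deriv_zeros[OF der] insert.prems(2) zeros by auto
  then have "\<forall>i\<in>L. c i * (e i - e \<mu>) = 0"
    using insert.IH[OF shifted_inj, of "\<lambda>i. c i * (e i - e \<mu>)"] by (simp add: h'_def)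
  then have cL: "\<forall>i\<in>L. c i = 0"
    using distinct by auto
  obtain t where "h t = 0"
    using insert.prems(2) zeros by (metis (mono_tags) empty_Collect_eq finite.emptyI)
  then have "c \<mu> = 0"
    using cL by (simp add: h_def)
  then show ?case
    using cL by simp
qed

definition power_sum :: "real \<Rightarrow> (nat \<Rightarrow> real) \<Rightarrow> real" where
  "power_sum t x = (\<Sum>n\<in>{n. x n \<noteq> 0}. \<bar>x n\<bar> powr t)"

definition value_count :: "(nat \<Rightarrow> real) \<Rightarrow> real \<Rightarrow> nat" where
  "value_count x v = card {n. x n \<noteq> 0 \<and> \<bar>x n\<bar> = v}"

lemma tnorm_eq_power_sum: "tnorm t x = power_sum t x powr (1 / t)"
  by (simp add: tnorm_def power_sum_def)

lemma power_sum_nonneg: "power_sum t x \<ge> 0"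
  by (simp add: power_sum_def sum_nonneg)

lemma tnorm_nonneg: "tnorm t x \<ge> 0"
  by (simp add: tnorm_def)

lemma tnorm_eq_iff_power_sum_eq:
  assumes "t > 0"
  shows "tnorm t x = tnorm t y \<longleftrightarrow> power_sum t x = power_sum t y"
proof
  assume "tnorm t x = tnorm t y"
  then have "(power_sum t x powr (1 / t)) powr t = (power_sum t y powr (1 / t)) powr t"
    by (simp add: tnorm_eq_power_sum)
  then show "power_sum t x = power_sum t y"
    using assms by (simp add: powr_powr power_sum_nonneg)
qed (simp add: tnorm_eq_power_sum)

lemma tnorm_mono_power_sum:
  assumes "t > 0" "power_sum t x \<le> power_sum t y"
  shows "tnorm t x \<le> tnorm t y"
  using assms by (simp add: tnorm_eq_power_sum powr_mono2 power_sum_nonneg)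

lemma power_sum_by_value_count:
  assumes x: "x \<in> realinf" and L: "finite L" "(\<lambda>n. \<bar>x n\<bar>) ` {n. x n \<noteq> 0} \<subseteq> L"
  shows "power_sum t x = (\<Sum>v\<in>L. real (value_count x v) * v powr t)"
proof -
  let ?N = "{n. x n \<noteq> 0}"
  have "power_sum t x = (\<Sum>v\<in>(\<lambda>n. \<bar>x n\<bar>) ` ?N. \<Sum>n\<in>{n\<in>?N. \<bar>x n\<bar> = v}. \<bar>x n\<bar> powr t)"
    unfolding power_sum_def using x by (intro sum.image_gen) (simp add: realinf_def)
  also have "\<dots> = (\<Sum>v\<in>(\<lambda>n. \<bar>x n\<bar>) ` ?N. real (value_count x v) * v powr t)"
  proof (rule sum.cong[OF refl])
    fix v
    have "(\<Sum>n\<in>{n\<in>?N. \<bar>x n\<bar> = v}. \<bar>x n\<bar> powr t) = (\<Sum>n\<in>{n\<in>?N. \<bar>x n\<bar> = v}. v powr t)"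
      by (rule sum.cong) auto
    then show "(\<Sum>n\<in>{n\<in>?N. \<bar>x n\<bar> = v}. \<bar>x n\<bar> powr t) = real (value_count x v) * v powr t"
      by (simp add: value_count_def)
  qed
  also have "\<dots> = (\<Sum>v\<in>L. real (value_count x v) * v powr t)"
  proof (intro sum.mono_neutral_left)
    show "\<forall>v\<in>L - (\<lambda>n. \<bar>x n\<bar>) ` ?N. real (value_count x v) * v powr t = 0"
    proof
      fix v assume "v \<in> L - (\<lambda>n. \<bar>x n\<bar>) ` ?N"
      then have "{n. x n \<noteq> 0 \<and> \<bar>x n\<bar> = v} = {}"
        by auto
      then show "real (value_count x v) * v powr t = 0"
        by (metis card.empty mult_zero_left of_nat_0 value_count_def)
    qed
  qed (use L in auto)
  finally show ?thesis .
qed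

text \<open>The power sums are exponential sums in \<open>t\<close> with exponents \<open>ln v\<close>, so two of them
  either agree everywhere or only finitely often.\<close>
lemma tnorm_eq_if_eq_infinitely_often:
  assumes x: "x \<in> realinf" and y: "y \<in> realinf"
    and inf: "infinite {t. t > 0 \<and> tnorm t x = tnorm t y}" and "s > 0"
  shows "tnorm s x = tnorm s y"
proof -
  define L where "L = (\<lambda>n. \<bar>x n\<bar>) ` {n. x n \<noteq> 0} \<union> (\<lambda>n. \<bar>y n\<bar>) ` {n. y n \<noteq> 0}"
  define c where "c v = real (value_count x v) - real (value_count y v)" for v
  have L: "finite L" "L \<subseteq> {0<..}"
    using x y by (auto simp: L_def realinf_def)
  have diff: "power_sum t x - power_sum t y = (\<Sum>v\<in>L. c v * exp (ln v * t))" for t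
  proof -
    have "power_sum t x - power_sum t y = (\<Sum>v\<in>L. c v * v powr t)"
      using power_sum_by_value_count[OF x L(1)] power_sum_by_value_count[OF y L(1)]
      by (simp add: L_def c_def sum_subtractf left_diff_distrib)
    also have "\<dots> = (\<Sum>v\<in>L. c v * exp (ln v * t))"
      using L(2) by (intro sum.cong) (auto simp: powr_def mult.commute)
    finally show ?thesis .
  qed
  have "{t. t > 0 \<and> tnorm t x = tnorm t y} \<subseteq> {t. (\<Sum>v\<in>L. c v * exp (ln v * t)) = 0}"
    by (auto simp: tnorm_eq_iff_power_sum_eq simp flip: diff)
  then have "infinite {t. (\<Sum>v\<in>L. c v * exp (ln v * t)) = 0}"
    using inf finite_subset by blast
  moreover have "inj_on ln L"
    using L(2) by (intro inj_onI) (metis greaterThan_iff ln_inj_iff subsetD)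
  ultimately have "\<forall>v\<in>L. c v = 0"
    using exp_sum_coeffs_zero L(1) by blast
  then show ?thesis
    using diff[of s] tnorm_eq_iff_power_sum_eq[OF \<open>s > 0\<close>] by simp
qed

lemma isCont_tnorm:
  assumes x: "x \<in> realinf" and "t > 0"
  shows "isCont (\<lambda>s. tnorm s x) t"
proof (cases "{n. x n \<noteq> 0} = {}")
  case True
  then show ?thesis by (simp add: tnorm_def)
next
  case False
  then have "(\<Sum>n\<in>{n. x n \<noteq> 0}. \<bar>x n\<bar> powr t) > 0"
    using x by (intro sum_pos) (auto simp: realinf_def)
  then show ?thesis
    using \<open>t > 0\<close> by (auto simp: tnorm_def intro!: continuous_intros)
qed

lemma height_nonneg: "height \<phi> \<Longrightarrow> \<phi> b \<ge> 0"
  by (simp add: height_def)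

lemma height_zero: "height \<phi> \<Longrightarrow> \<phi> 0 = 0"
  by (simp add: height_def)

lemma comp_fin_seq_in_realinf:
  assumes "height \<phi>" "a \<in> fin_seqs S"
  shows "\<phi> \<circ> a \<in> realinf"
proof -
  have "{n. \<phi> (a n) \<noteq> 0} \<subseteq> {n. a n \<noteq> 0}"
    using height_zero[OF assms(1)] by auto
  then show ?thesis
    using assms(2) finite_subset by (auto simp: realinf_def fin_seqs_def)
qed

lemma fin_seqs_mono: "S \<subseteq> T \<Longrightarrow> fin_seqs S \<subseteq> fin_seqs T"
  by (auto simp: fin_seqs_def)

lemma fin_seqs_range: "a \<in> fin_seqs S \<Longrightarrow> range a \<subseteq> R \<Longrightarrow> a \<in> fin_seqs R"
  by (auto simp: fin_seqs_def)

lemma finite_range_fin_seq: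
  assumes "a \<in> fin_seqs S"
  shows "finite (range a)"
proof -
  have "range a \<subseteq> insert 0 (a ` {n. a n \<noteq> 0})" by auto
  then show ?thesis
    using assms finite_subset by (auto simp: fin_seqs_def)
qed

lemma bdd_below_tnorms: "bdd_below {tnorm t (\<phi> \<circ> a) | a. P a}"
  by (rule bdd_belowI[of _ 0]) (auto simp: tnorm_nonneg)

lemma phi_t_le_tnorm:
  assumes "a \<in> fin_seqs UNIV" "tauG a = \<alpha>"
  shows "phi_t \<phi> t \<alpha> \<le> tnorm t (\<phi> \<circ> a)"
  unfolding phi_t_def using assms by (intro cInf_lower[OF _ bdd_below_tnorms]) auto

lemma replaces_atI:
  assumes "0 \<in> R" "a \<in> fin_seqs R" "tauG a = \<alpha>" "tnorm t (\<phi> \<circ> a) = phi_t \<phi> t \<alpha>"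
  shows "replaces_at \<phi> \<alpha> R t"
proof -
  let ?A = "{tnorm t (\<phi> \<circ> a) | a. a \<in> fin_seqs R \<and> tauG a = \<alpha>}"
  have "Inf ?A \<le> phi_t \<phi> t \<alpha>"
    using assms(2-4) by (intro cInf_lower[OF _ bdd_below_tnorms, THEN order_trans]) auto
  moreover have "phi_t \<phi> t \<alpha> \<le> Inf ?A"
    using assms(2,3) fin_seqs_mono[of R UNIV]
    by (intro cInf_greatest) (auto intro!: phi_t_le_tnorm)
  ultimately show ?thesis
    unfolding replaces_at_def using assms(1-3) by auto
qed

lemma dickson_finite_basis:
  fixes \<mu> :: "'c \<Rightarrow> 'v \<Rightarrow> nat"
  assumes "finite V"
  shows "\<exists>B\<subseteq>A. finite B \<and> (\<forall>a\<in>A. \<exists>b\<in>B. \<forall>v\<in>V. \<mu> b v \<le> \<mu> a v)"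
  using assms
proof (induction V arbitrary: A rule: finite_remove_induct)
  case empty
  show ?case
  proof (cases "A = {}")
    case False
    then obtain a0 where "a0 \<in> A" by blast
    then show ?thesis by (intro exI[of _ "{a0}"]) auto
  qed auto
next
  case (remove V)
  show ?case
  proof (cases "A = {}")
    case False
    then obtain a0 where a0: "a0 \<in> A" by blast
    \<comment> \<open>An element not above \<open>a0\<close> lies below it in some coordinate \<open>u\<close>, where it takes one
      of finitely many values \<open>j\<close>; each such slice is handled by the remaining coordinates.\<close>
    define slice where "slice u j = (SOME B. B \<subseteq> {a\<in>A. \<mu> a u = j} \<and> finite B \<and>
        (\<forall>a\<in>{a\<in>A. \<mu> a u = j}. \<exists>b\<in>B. \<forall>v\<in>V - {u}. \<mu> b v \<le> \<mu> a v))" for u j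
    have slice: "slice u j \<subseteq> {a\<in>A. \<mu> a u = j} \<and> finite (slice u j) \<and>
        (\<forall>a\<in>{a\<in>A. \<mu> a u = j}. \<exists>b\<in>slice u j. \<forall>v\<in>V - {u}. \<mu> b v \<le> \<mu> a v)" if "u \<in> V" for u j
      unfolding slice_def using remove.IH[OF that, of "{a\<in>A. \<mu> a u = j}"] by (rule someI2_ex) blast
    have slice_sub: "slice u j \<subseteq> {a\<in>A. \<mu> a u = j}" and slice_fin: "finite (slice u j)"
      and slice_basis: "a \<in> A \<Longrightarrow> \<mu> a u = j \<Longrightarrow> \<exists>b\<in>slice u j. \<forall>v\<in>V - {u}. \<mu> b v \<le> \<mu> a v"
      if "u \<in> V" for u j a
      using slice[OF that] by blast+
    define B where "B = insert a0 (\<Union>u\<in>V. \<Union>j<\<mu> a0 u. slice u j)"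
    have "\<exists>b\<in>B. \<forall>v\<in>V. \<mu> b v \<le> \<mu> a v" if a: "a \<in> A" for a
    proof (cases "\<forall>v\<in>V. \<mu> a0 v \<le> \<mu> a v")
      case False
      then obtain u where u: "u \<in> V" "\<mu> a u < \<mu> a0 u"
        by (auto simp: not_le)
      obtain b where b: "b \<in> slice u (\<mu> a u)" "\<forall>v\<in>V - {u}. \<mu> b v \<le> \<mu> a v"
        using slice_basis[OF u(1) a refl] by blast
      have "\<mu> b u = \<mu> a u"
        using slice_sub[OF u(1)] b(1) by blast
      then have "\<forall>v\<in>V. \<mu> b v \<le> \<mu> a v"
        using b(2) by (metis Diff_iff order_refl singletonD)
      moreover have "b \<in> B"
        unfolding B_def using u b(1) by blast
      ultimately show ?thesis by blast
    next
      case True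
      then show ?thesis
        unfolding B_def by blast
    qed
    moreover have "B \<subseteq> A"
      unfolding B_def using a0 slice_sub by blast
    moreover have "finite B"
      unfolding B_def using slice_fin remove.hyps(1) by auto
    ultimately show ?thesis by blast
  qed auto
qed

lemma tnorm_mono_value_count:
  assumes h: "height \<phi>" and finS: "finite (\<phi> ` S)" and "t > 0"
    and a: "a \<in> fin_seqs S" and b: "b \<in> fin_seqs S"
    and le: "\<forall>v\<in>\<phi> ` S. value_count (\<phi> \<circ> b) v \<le> value_count (\<phi> \<circ> a) v"
  shows "tnorm t (\<phi> \<circ> b) \<le> tnorm t (\<phi> \<circ> a)"
proof -
  have heights: "(\<lambda>n. \<bar>(\<phi> \<circ> c) n\<bar>) ` {n. (\<phi> \<circ> c) n \<noteq> 0} \<subseteq> \<phi> ` S" if "c \<in> fin_seqs S" for c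
    using that height_nonneg[OF h] by (auto simp: fin_seqs_def)
  have "power_sum t (\<phi> \<circ> b) = (\<Sum>v\<in>\<phi> ` S. real (value_count (\<phi> \<circ> b) v) * v powr t)"
    by (rule power_sum_by_value_count[OF comp_fin_seq_in_realinf[OF h b] finS heights[OF b]])
  also have "\<dots> \<le> (\<Sum>v\<in>\<phi> ` S. real (value_count (\<phi> \<circ> a) v) * v powr t)"
    using le by (intro sum_mono mult_right_mono) auto
  also have "\<dots> = power_sum t (\<phi> \<circ> a)"
    by (rule power_sum_by_value_count[OF comp_fin_seq_in_realinf[OF h a] finS heights[OF a], symmetric])
  finally show ?thesis
    using tnorm_mono_power_sum[OF \<open>t > 0\<close>] by blast
qed

lemma cInf_image_eq_Min_basis:
  fixes g :: "'b \<Rightarrow> real"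
  assumes "finite B" "B \<noteq> {}" "B \<subseteq> A" and basis: "\<forall>a\<in>A. \<exists>b\<in>B. g b \<le> g a"
  shows "Inf (g ` A) = Min (g ` B)"
proof (rule antisym)
  have lower: "Min (g ` B) \<le> g a" if a: "a \<in> A" for a
  proof -
    obtain b where "b \<in> B" "g b \<le> g a"
      using basis a by blast
    moreover have "Min (g ` B) \<le> g b"
      using assms(1) \<open>b \<in> B\<close> by (intro Min_le) auto
    ultimately show ?thesis
      by linarith
  qed
  have "Min (g ` B) \<in> g ` B"
    using assms(1,2) by (intro Min_in) auto
  then have "Min (g ` B) \<in> g ` A"
    using assms(3) by blast
  moreover have "bdd_below (g ` A)"
    using lower by (rule bdd_belowI2)
  ultimately show "Inf (g ` A) \<le> Min (g ` B)"
    by (rule cInf_lower)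
  show "Min (g ` B) \<le> Inf (g ` A)"
    using assms(2,3) lower by (intro cInf_greatest) blast+
qed

lemma phi_t_eq_Min_if_finite_heights:
  assumes h: "height \<phi>" and Ipos: "I \<subseteq> {0<..}" and finS: "finite (\<phi> ` S)"
    and rep: "replaces_unif \<phi> \<alpha> S I"
  shows "\<exists>X. finite X \<and> X \<noteq> {} \<and> X \<subseteq> realinf \<and> (\<forall>t\<in>I. phi_t \<phi> t \<alpha> = Min (tnorm t ` X))"
proof (cases "I = {}")
  case True
  then show ?thesis
    by (intro exI[of _ "{\<lambda>n. 0}"]) (simp add: realinf_def)
next
  case False
  define A where "A = {a \<in> fin_seqs S. tauG a = \<alpha>}"
  have "A \<noteq> {}"
    using rep False unfolding replaces_unif_def replaces_at_def A_def by blast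
  obtain B where B: "B \<subseteq> A" "finite B"
    and basis: "\<forall>a\<in>A. \<exists>b\<in>B. \<forall>v\<in>\<phi> ` S. value_count (\<phi> \<circ> b) v \<le> value_count (\<phi> \<circ> a) v"
    using dickson_finite_basis[OF finS, of A "\<lambda>a. value_count (\<phi> \<circ> a)"] by blast
  have "B \<noteq> {}"
    using basis \<open>A \<noteq> {}\<close> by blast
  define X where "X = (\<lambda>b. \<phi> \<circ> b) ` B"
  have "phi_t \<phi> t \<alpha> = Min (tnorm t ` X)" if t: "t \<in> I" for t
  proof -
    have "\<exists>b\<in>B. tnorm t (\<phi> \<circ> b) \<le> tnorm t (\<phi> \<circ> a)" if a: "a \<in> A" for a
    proof -
      obtain b where b: "b \<in> B" "\<forall>v\<in>\<phi> ` S. value_count (\<phi> \<circ> b) v \<le> value_count (\<phi> \<circ> a) v"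
        using basis a by blast
      moreover have "a \<in> fin_seqs S" "b \<in> fin_seqs S"
        using a b(1) B(1) by (auto simp: A_def)
      moreover have "t > 0"
        using t Ipos by auto
      ultimately show ?thesis
        using tnorm_mono_value_count[OF h finS] by blast
    qed
    then have "Inf ((\<lambda>a. tnorm t (\<phi> \<circ> a)) ` A) = Min ((\<lambda>b. tnorm t (\<phi> \<circ> b)) ` B)"
      using B \<open>B \<noteq> {}\<close> by (intro cInf_image_eq_Min_basis) auto
    moreover have "phi_t \<phi> t \<alpha> = Inf ((\<lambda>a. tnorm t (\<phi> \<circ> a)) ` A)"
      using rep t unfolding replaces_unif_def replaces_at_def A_def by (simp add: setcompr_eq_image)
    ultimately show ?thesis
      by (simp add: X_def image_image)
  qed
  moreover have "X \<subseteq> realinf"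
    using B(1) comp_fin_seq_in_realinf[OF h] by (auto simp: X_def A_def)
  moreover have "finite X" "X \<noteq> {}"
    using B(2) \<open>B \<noteq> {}\<close> by (auto simp: X_def)
  ultimately show ?thesis
    by blast
qed

lemma eventually_Min_eq:
  fixes g :: "'b \<Rightarrow> real \<Rightarrow> real"
  assumes X: "finite X" "x \<in> X" and min: "g x t = Min ((\<lambda>y. g y t) ` X)"
    and cont: "\<And>y. y \<in> X \<Longrightarrow> isCont (g y) t"
    and ties: "\<And>y. y \<in> X \<Longrightarrow> g y t = g x t \<Longrightarrow> eventually (\<lambda>s. g y s = g x s) (nhds t)"
  shows "eventually (\<lambda>s. Min ((\<lambda>y. g y s) ` X) = g x s) (nhds t)"
proof -
  have "eventually (\<lambda>s. g x s \<le> g y s) (nhds t)" if y: "y \<in> X" for y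
  proof (cases "g y t = g x t")
    case True
    then show ?thesis
      using ties[OF y] by (auto elim: eventually_mono)
  next
    case False
    then have "0 < g y t - g x t"
      using min X y by (metis Min_le diff_gt_0_iff_gt finite_imageI image_eqI order_le_neq_trans)
    moreover have "((\<lambda>s. g y s - g x s) \<longlongrightarrow> g y t - g x t) (nhds t)"
      using cont[OF y] cont[OF X(2)] by (intro tendsto_diff) (simp_all add: isCont_def tendsto_at_iff_tendsto_nhds)
    ultimately have "eventually (\<lambda>s. 0 < g y s - g x s) (nhds t)"
      by (rule order_tendstoD(1)[rotated])
    then show ?thesis
      by (rule eventually_mono) simp
  qed
  then have "eventually (\<lambda>s. \<forall>y\<in>X. g x s \<le> g y s) (nhds t)"
    using X(1) by (simp add: eventually_ball_finite)
  then show ?thesis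
    by (rule eventually_mono) (use X in \<open>auto intro!: Min_eqI\<close>)
qed

lemma standard_pt_if_eventually_eq_tnorm:
  assumes "t \<in> I" "x \<in> realinf"
    and ev: "eventually (\<lambda>s. s \<in> I \<and> phi_t \<phi> s \<alpha> = tnorm s x) (nhds t)"
  shows "standard_pt \<phi> \<alpha> I t"
proof -
  obtain d where "d > 0" and d: "\<And>s. dist s t < d \<Longrightarrow> s \<in> I \<and> phi_t \<phi> s \<alpha> = tnorm s x"
    using ev by (auto simp: eventually_nhds_metric)
  then have "{t - d<..<t + d} \<subseteq> I" "uniform_set \<phi> \<alpha> {t - d<..<t + d}"
    using assms(2) by (auto simp: uniform_set_def dist_real_def abs_less_iff)
  then show ?thesis
    unfolding standard_pt_def using assms(1) \<open>d > 0\<close>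
    by (intro conjI exI[of _ "t - d"] exI[of _ "t + d"]) auto
qed

lemma finite_exceptional_if_phi_t_eq_Min:
  assumes Ipos: "I \<subseteq> {0<..}" and "open I"
    and X: "finite X" "X \<noteq> {}" "X \<subseteq> realinf"
    and min: "\<forall>t\<in>I. phi_t \<phi> t \<alpha> = Min (tnorm t ` X)"
  shows "finite {t \<in> I. exceptional_pt \<phi> \<alpha> I t}"
proof -
  define crossings where "crossings =
    (\<Union>x\<in>X. \<Union>y\<in>{y\<in>X. \<exists>s>0. tnorm s x \<noteq> tnorm s y}. {t. t > 0 \<and> tnorm t x = tnorm t y})"
  have "finite {t. t > 0 \<and> tnorm t x = tnorm t y}"
    if "x \<in> X" "y \<in> X" "\<exists>s>0. tnorm s x \<noteq> tnorm s y" for x y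
    using that X(3) tnorm_eq_if_eq_infinitely_often by blast
  then have "finite crossings"
    unfolding crossings_def using X(1) by (intro finite_UN_I) auto
  moreover have "standard_pt \<phi> \<alpha> I t" if t: "t \<in> I" "t \<notin> crossings" for t
  proof -
    have "t > 0"
      using t Ipos by auto
    have "Min (tnorm t ` X) \<in> tnorm t ` X"
      using X by (intro Min_in) auto
    then obtain x where x: "x \<in> X" "tnorm t x = Min (tnorm t ` X)"
      by auto
    have "eventually (\<lambda>s. Min ((\<lambda>y. tnorm s y) ` X) = tnorm s x) (nhds t)"
    proof (rule eventually_Min_eq[where g = "\<lambda>y s. tnorm s y"])
      show "isCont (\<lambda>s. tnorm s y) t" if "y \<in> X" for y
        using that X(3) \<open>t > 0\<close> isCont_tnorm by blast
      show "eventually (\<lambda>s. tnorm s y = tnorm s x) (nhds t)" if "y \<in> X" "tnorm t y = tnorm t x" for y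
      proof -
        have "\<forall>s>0. tnorm s x = tnorm s y"
          using that x(1) t(2) \<open>t > 0\<close> unfolding crossings_def by fastforce
        moreover have "eventually (\<lambda>s. s > 0) (nhds t)"
          using eventually_nhds_in_open[of "{0<..}" t] \<open>t > 0\<close> by simp
        ultimately show ?thesis
          by (auto elim: eventually_mono)
      qed
    qed (use X x in \<open>auto simp: image_image\<close>)
    moreover have "eventually (\<lambda>s. s \<in> I) (nhds t)"
      using \<open>open I\<close> t(1) by (rule eventually_nhds_in_open)
    ultimately have "eventually (\<lambda>s. s \<in> I \<and> phi_t \<phi> s \<alpha> = tnorm s x) (nhds t)"
      by eventually_elim (use min in auto)
    then show ?thesis
      using t(1) x(1) X(3) by (intro standard_pt_if_eventually_eq_tnorm) auto
  qed
  then have "{t \<in> I. exceptional_pt \<phi> \<alpha> I t} \<subseteq> crossings"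
    by (auto simp: exceptional_pt_def)
  ultimately show ?thesis
    using finite_subset by blast
qed

definition agrees_near :: "real set \<Rightarrow> (real \<Rightarrow> real) \<Rightarrow> (real \<Rightarrow> real) \<Rightarrow> real \<Rightarrow> bool" where
  "agrees_near I f h t \<longleftrightarrow> (\<exists>p q. t \<in> {p<..<q} \<and> {p<..<q} \<subseteq> I \<and> (\<forall>s\<in>{p<..<q}. f s = h s))"

lemma agrees_near_unique:
  assumes ident: "infinite {t\<in>I. g t = h t} \<Longrightarrow> g = h"
    and "agrees_near I f g t" "agrees_near I f h t"
  shows "g = h"
proof -
  obtain p q p' q' where "t \<in> {p<..<q}" "{p<..<q} \<subseteq> I" "\<forall>s\<in>{p<..<q}. f s = g s"
    and "t \<in> {p'<..<q'}" "{p'<..<q'} \<subseteq> I" "\<forall>s\<in>{p'<..<q'}. f s = h s"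
    using assms(2,3) by (auto simp: agrees_near_def)
  then have "{max p p'<..<min q q'} \<subseteq> {t\<in>I. g t = h t}" "max p p' < min q q'"
    by auto (metis greaterThanLessThan_iff)
  then show ?thesis
    using ident infinite_Ioo_iff finite_subset by metis
qed

lemma agrees_near_segment:
  assumes ident: "\<And>g h. g \<in> H \<Longrightarrow> h \<in> H \<Longrightarrow> infinite {t\<in>I. g t = h t} \<Longrightarrow> g = h"
    and local: "\<And>s. s \<in> {a..b} \<Longrightarrow> \<exists>k\<in>H. agrees_near I f k s"
    and "a \<le> b" "g \<in> H" "h \<in> H" "agrees_near I f g a" "agrees_near I f h b"
  shows "g = h"
proof -
  have "agrees_near I f g b"
  proof (rule connected_induction_simple[where P = "agrees_near I f g", OF connected_Icc])
    fix c assume "c \<in> {a..b}"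
    then obtain k where k: "k \<in> H" "agrees_near I f k c"
      using local by blast
    then obtain p q where pq: "c \<in> {p<..<q}" "{p<..<q} \<subseteq> I" "\<forall>s\<in>{p<..<q}. f s = k s"
      unfolding agrees_near_def by blast
    have near_k: "agrees_near I f k x" if "x \<in> {p<..<q}" for x
      using that pq by (auto simp: agrees_near_def)
    have "\<forall>x\<in>{a..b} \<inter> {p<..<q}. \<forall>y\<in>{a..b} \<inter> {p<..<q}. agrees_near I f g x \<longrightarrow> agrees_near I f g y"
      using agrees_near_unique[OF ident[OF \<open>g \<in> H\<close> k(1)]] near_k by blast
    then show "\<exists>T. openin (top_of_set {a..b}) T \<and> c \<in> T \<and>
        (\<forall>x\<in>T. \<forall>y\<in>T. agrees_near I f g x \<longrightarrow> agrees_near I f g y)"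
      using \<open>c \<in> {a..b}\<close> pq(1) by (intro exI[of _ "{a..b} \<inter> {p<..<q}"]) auto
  qed (use assms in auto)
  then show ?thesis
    using agrees_near_unique ident assms by metis
qed

lemma agrees_near_separated:
  assumes "is_interval I"
    and ident: "\<And>g h. g \<in> H \<Longrightarrow> h \<in> H \<Longrightarrow> infinite {t\<in>I. g t = h t} \<Longrightarrow> g = h"
    and local: "\<And>t. t \<in> I \<Longrightarrow> t \<notin> F \<Longrightarrow> \<exists>h\<in>H. agrees_near I f h t"
    and "a \<le> b" "a \<in> I" "b \<in> I" "g \<in> H" "h \<in> H" "agrees_near I f g a" "agrees_near I f h b"
    and "g \<noteq> h"
  shows "\<exists>p\<in>F. a < p \<and> p < b"
proof (rule ccontr)
  assume no_sep: "\<not> ?thesis"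
  have "\<exists>k\<in>H. agrees_near I f k s" if s: "s \<in> {a..b}" for s
  proof (cases "s = a \<or> s = b")
    case True
    then show ?thesis
      using assms(7-10) by auto
  next
    case False
    then have "s \<in> I"
      using s by (intro mem_is_interval_1_I[OF \<open>is_interval I\<close> \<open>a \<in> I\<close> \<open>b \<in> I\<close>]) auto
    moreover have "s \<notin> F"
      using False s no_sep by fastforce
    ultimately show ?thesis
      using local by blast
  qed
  then have "g = h"
    using agrees_near_segment[OF ident _ assms(4,7-10)] by blast
  with \<open>g \<noteq> h\<close> show False ..
qed

text \<open>A match is determined by the points of \<open>F\<close> to the left of a point where it occurs.\<close>
lemma finite_locally_agreeing_functions:
  assumes "is_interval I" "finite F"
    and ident: "\<And>g h. g \<in> H \<Longrightarrow> h \<in> H \<Longrightarrow> infinite {t\<in>I. g t = h t} \<Longrightarrow> g = h"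
    and local: "\<And>t. t \<in> I \<Longrightarrow> t \<notin> F \<Longrightarrow> \<exists>h\<in>H. agrees_near I f h t"
  shows "finite {h\<in>H. \<exists>t\<in>I. agrees_near I f h t}"
proof -
  define G where "G = {h\<in>H. \<exists>t\<in>I. agrees_near I f h t}"
  have "\<forall>g\<in>G. \<exists>t. t \<in> I \<and> agrees_near I f g t"
    by (auto simp: G_def)
  then obtain c where c: "\<forall>g\<in>G. c g \<in> I \<and> agrees_near I f g (c g)"
    by (metis bchoice)
  have distinct: "{p\<in>F. p < c g} \<noteq> {p\<in>F. p < c h}"
    if gh: "g \<in> G" "h \<in> G" "g \<noteq> h" "c g \<le> c h" for g h
  proof -
    have "c g \<in> I" "c h \<in> I" "g \<in> H" "h \<in> H" "agrees_near I f g (c g)" "agrees_near I f h (c h)"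
      using c gh(1,2) by (auto simp: G_def)
    then obtain p where "p \<in> F" "c g < p" "p < c h"
      using agrees_near_separated[OF assms(1) ident local gh(4)] gh(3) by blast
    then show ?thesis
      by (metis (mono_tags, lifting) mem_Collect_eq not_less_iff_gr_or_eq)
  qed
  have "inj_on (\<lambda>g. {p\<in>F. p < c g}) G"
  proof (rule inj_onI, rule ccontr)
    fix g h assume "g \<in> G" "h \<in> G" "{p\<in>F. p < c g} = {p\<in>F. p < c h}" "g \<noteq> h"
    then show False
      using distinct[of g h] distinct[of h g] by (cases "c g \<le> c h") auto
  qed
  moreover have "finite ((\<lambda>g. {p\<in>F. p < c g}) ` G)"
    using \<open>finite F\<close> by (rule finite_subset[rotated, OF finite_Pow_iff[THEN iffD2]]) auto
  ultimately show ?thesis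
    unfolding G_def[symmetric] by (rule finite_imageD[rotated])
qed

lemma countable_fin_seqs: "countable (fin_seqs (UNIV :: 'a::{zero,countable} set))"
proof -
  define decode :: "'a list \<Rightarrow> nat \<Rightarrow> 'a" where "decode xs n = (if n < length xs then xs ! n else 0)" for xs n
  have "a \<in> range decode" if a: "a \<in> fin_seqs UNIV" for a
  proof -
    obtain N where N: "\<And>n. a n \<noteq> 0 \<Longrightarrow> n < N"
      using a finite_nat_set_iff_bounded by (auto simp: fin_seqs_def)
    have "a = decode (map a [0..<N])"
      unfolding decode_def fun_eq_iff using N leD by fastforce
    then show ?thesis
      by blast
  qed
  then have "fin_seqs UNIV \<subseteq> range decode"
    by blast
  then show ?thesis
    by (rule countable_subset) simp
qed

text \<open>Countably many representations attain the infimum at uncountably many \<open>t\<close>, so one of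
  them attains it infinitely often and, by rigidity of t-norms, matches \<open>x\<close> everywhere.\<close>
lemma attaining_representation_matches:
  fixes \<phi> :: "'a::{ab_group_add,countable} \<Rightarrow> real"
  assumes h: "height \<phi>" and U: "uncountable U" "U \<subseteq> {0<..}"
    and att: "\<forall>t\<in>U. attained \<phi> t \<alpha>" and x: "x \<in> realinf"
    and eq: "\<forall>t\<in>U. phi_t \<phi> t \<alpha> = tnorm t x"
  shows "\<exists>a\<in>fin_seqs UNIV. tauG a = \<alpha> \<and> (\<forall>s>0. tnorm s (\<phi> \<circ> a) = tnorm s x)"
proof -
  obtain opt where opt: "\<And>t. t \<in> U \<Longrightarrow>
      opt t \<in> fin_seqs UNIV \<and> tauG (opt t) = \<alpha> \<and> tnorm t (\<phi> \<circ> opt t) = phi_t \<phi> t \<alpha>"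
    using att unfolding attained_def by metis
  have "countable (opt ` U)"
    using countable_subset[OF _ countable_fin_seqs] opt by blast
  moreover have "U = (\<Union>a\<in>opt ` U. {t\<in>U. opt t = a})"
    by blast
  ultimately have "\<exists>a\<in>opt ` U. infinite {t\<in>U. opt t = a}"
    using U(1) countable_UN[of "opt ` U" "\<lambda>a. {t\<in>U. opt t = a}"] countable_finite by metis
  then obtain a where a: "a \<in> opt ` U" "infinite {t\<in>U. opt t = a}" ..
  then have a_rep: "a \<in> fin_seqs UNIV" "tauG a = \<alpha>"
    using opt by auto
  have "{t\<in>U. opt t = a} \<subseteq> {t. t > 0 \<and> tnorm t (\<phi> \<circ> a) = tnorm t x}"
    using opt eq U(2) by auto
  then have "infinite {t. t > 0 \<and> tnorm t (\<phi> \<circ> a) = tnorm t x}"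
    using a(2) finite_subset by blast
  then show ?thesis
    using tnorm_eq_if_eq_infinitely_often[OF comp_fin_seq_in_realinf[OF h a_rep(1)] x] a_rep by blast
qed

lemma agrees_near_at: "agrees_near I f h t \<Longrightarrow> f t = h t"
  by (auto simp: agrees_near_def)

text \<open>Restricted to \<open>I\<close>, so that profiles agreeing on \<open>I\<close> are equal as functions.\<close>
definition tnorm_profile :: "real set \<Rightarrow> (nat \<Rightarrow> real) \<Rightarrow> real \<Rightarrow> real" where
  "tnorm_profile I x = restrict (\<lambda>t. tnorm t x) I"

lemma tnorm_profile_eq_if_eq_infinitely_often:
  assumes "I \<subseteq> {0<..}" "x \<in> realinf" "y \<in> realinf" "infinite {t\<in>I. tnorm t x = tnorm t y}"
  shows "tnorm_profile I x = tnorm_profile I y"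
proof -
  have "{t\<in>I. tnorm t x = tnorm t y} \<subseteq> {t. t > 0 \<and> tnorm t x = tnorm t y}"
    using assms(1) by auto
  then have "infinite {t. t > 0 \<and> tnorm t x = tnorm t y}"
    using assms(4) finite_subset by blast
  then have "tnorm t x = tnorm t y" if "t \<in> I" for t
    using tnorm_eq_if_eq_infinitely_often[OF assms(2,3)] that assms(1) by blast
  then show ?thesis
    unfolding tnorm_profile_def by (rule restrict_ext)
qed

lemma agrees_near_tnorm_profile_if_standard:
  fixes \<phi> :: "'a::{ab_group_add,countable} \<Rightarrow> real"
  assumes h: "height \<phi>" and Ipos: "I \<subseteq> {0<..}" and att: "\<forall>t\<in>I. attained \<phi> t \<alpha>"
    and "standard_pt \<phi> \<alpha> I t"
  shows "\<exists>a\<in>fin_seqs UNIV. tauG a = \<alpha> \<and>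
    agrees_near I (\<lambda>s. phi_t \<phi> s \<alpha>) (tnorm_profile I (\<phi> \<circ> a)) t"
proof -
  obtain p q where pq: "t \<in> {p<..<q}" "{p<..<q} \<subseteq> I" "uniform_set \<phi> \<alpha> {p<..<q}"
    using assms(4) unfolding standard_pt_def by blast
  then obtain x where x: "x \<in> realinf" and unif: "\<forall>s\<in>{p<..<q}. phi_t \<phi> s \<alpha> = tnorm s x"
    unfolding uniform_set_def by blast
  have "uncountable {p<..<q}"
    using pq(1) by (simp add: uncountable_open_interval)
  moreover have "{p<..<q} \<subseteq> {0<..}" "\<forall>s\<in>{p<..<q}. attained \<phi> s \<alpha>"
    using pq(2) Ipos att by blast+
  ultimately have "\<exists>a\<in>fin_seqs UNIV. tauG a = \<alpha> \<and> (\<forall>s>0. tnorm s (\<phi> \<circ> a) = tnorm s x)"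
    by (rule attaining_representation_matches[OF h _ _ _ x unif])
  then obtain a where a: "a \<in> fin_seqs UNIV" "tauG a = \<alpha>" "\<forall>s>0. tnorm s (\<phi> \<circ> a) = tnorm s x"
    by blast
  have "phi_t \<phi> s \<alpha> = tnorm_profile I (\<phi> \<circ> a) s" if "s \<in> {p<..<q}" for s
    using that pq(2) unif a(3) Ipos by (auto simp: tnorm_profile_def)
  then have "agrees_near I (\<lambda>s. phi_t \<phi> s \<alpha>) (tnorm_profile I (\<phi> \<circ> a)) t"
    unfolding agrees_near_def using pq(1,2) by blast
  with a(1,2) show ?thesis
    by blast
qed

lemma finite_tnorm_profiles:
  fixes \<phi> :: "'a::{ab_group_add,countable} \<Rightarrow> real"
  assumes h: "height \<phi>" and ivl: "is_interval I" and Ipos: "I \<subseteq> {0<..}"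
    and att: "\<forall>t\<in>I. attained \<phi> t \<alpha>"
    and fin: "finite {t \<in> I. exceptional_pt \<phi> \<alpha> I t}"
  shows "finite {g \<in> (\<lambda>a. tnorm_profile I (\<phi> \<circ> a)) ` {a \<in> fin_seqs UNIV. tauG a = \<alpha>}.
    \<exists>t\<in>I. agrees_near I (\<lambda>s. phi_t \<phi> s \<alpha>) g t}"
proof (rule finite_locally_agreeing_functions[OF ivl fin])
  fix g k
  assume "g \<in> (\<lambda>a. tnorm_profile I (\<phi> \<circ> a)) ` {a \<in> fin_seqs UNIV. tauG a = \<alpha>}"
    and "k \<in> (\<lambda>a. tnorm_profile I (\<phi> \<circ> a)) ` {a \<in> fin_seqs UNIV. tauG a = \<alpha>}"
    and inf: "infinite {t\<in>I. g t = k t}"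
  then obtain a b where ab: "a \<in> fin_seqs UNIV" "b \<in> fin_seqs UNIV"
    "g = tnorm_profile I (\<phi> \<circ> a)" "k = tnorm_profile I (\<phi> \<circ> b)"
    by blast
  have "{t\<in>I. g t = k t} = {t\<in>I. tnorm t (\<phi> \<circ> a) = tnorm t (\<phi> \<circ> b)}"
    by (auto simp: ab tnorm_profile_def)
  with inf have "infinite {t\<in>I. tnorm t (\<phi> \<circ> a) = tnorm t (\<phi> \<circ> b)}"
    by simp
  then show "g = k"
    unfolding ab(3,4) using comp_fin_seq_in_realinf[OF h] ab(1,2)
    by (intro tnorm_profile_eq_if_eq_infinitely_often[OF Ipos]) auto
next
  fix t assume "t \<in> I" "t \<notin> {t \<in> I. exceptional_pt \<phi> \<alpha> I t}"
  then show "\<exists>g\<in>(\<lambda>a. tnorm_profile I (\<phi> \<circ> a)) ` {a \<in> fin_seqs UNIV. tauG a = \<alpha>}.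
      agrees_near I (\<lambda>s. phi_t \<phi> s \<alpha>) g t"
    using agrees_near_tnorm_profile_if_standard[OF h Ipos att, of t]
    by (auto simp: exceptional_pt_def)
qed

lemma replacing_set_if_finite_witnesses:
  assumes "finite W" "W \<subseteq> fin_seqs UNIV" "\<forall>a\<in>W. tauG a = \<alpha>"
    and opt: "\<forall>t\<in>I. \<exists>a\<in>W. tnorm t (\<phi> \<circ> a) = phi_t \<phi> t \<alpha>"
  shows "\<exists>R. finite R \<and> 0 \<in> R \<and> replaces_unif \<phi> \<alpha> R I"
proof -
  define R where "R = insert 0 (\<Union>a\<in>W. range a)"
  have "finite (range a)" if "a \<in> W" for a
    using that assms(2) finite_range_fin_seq by blast
  then have "finite R"
    using assms(1) by (simp add: R_def)
  moreover have "replaces_at \<phi> \<alpha> R t" if "t \<in> I" for t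
  proof -
    obtain a where a: "a \<in> W" "tnorm t (\<phi> \<circ> a) = phi_t \<phi> t \<alpha>"
      using opt \<open>t \<in> I\<close> by blast
    have "a \<in> fin_seqs R"
      using a(1) assms(2) by (rule_tac fin_seqs_range[of _ UNIV]) (auto simp: R_def)
    then show ?thesis
      using a assms(3) by (intro replaces_atI) (auto simp: R_def)
  qed
  ultimately show ?thesis
    unfolding replaces_unif_def R_def by blast
qed

lemma finite_replacing_set_if_finite_exceptional:
  fixes \<phi> :: "'a::{ab_group_add,countable} \<Rightarrow> real"
  assumes h: "height \<phi>" and ivl: "is_interval I" and Ipos: "I \<subseteq> {0<..}"
    and att: "\<forall>t\<in>I. attained \<phi> t \<alpha>"
    and fin: "finite {t \<in> I. exceptional_pt \<phi> \<alpha> I t}"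
  shows "\<exists>R. finite R \<and> 0 \<in> R \<and> replaces_unif \<phi> \<alpha> R I"
proof -
  define F where "F = {t \<in> I. exceptional_pt \<phi> \<alpha> I t}"
  define reps where "reps = {a \<in> fin_seqs UNIV. tauG a = \<alpha>}"
  define G where "G = {g \<in> (\<lambda>a. tnorm_profile I (\<phi> \<circ> a)) ` reps.
    \<exists>t\<in>I. agrees_near I (\<lambda>s. phi_t \<phi> s \<alpha>) g t}"
  have "finite G"
    unfolding G_def reps_def by (rule finite_tnorm_profiles[OF assms])
  obtain rep where rep: "\<forall>g\<in>G. rep g \<in> reps \<and> tnorm_profile I (\<phi> \<circ> rep g) = g"
    using bchoice[of G "\<lambda>g a. a \<in> reps \<and> tnorm_profile I (\<phi> \<circ> a) = g"] by (auto simp: G_def)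
  have "\<forall>t\<in>I. \<exists>a. a \<in> reps \<and> tnorm t (\<phi> \<circ> a) = phi_t \<phi> t \<alpha>"
    using att by (auto simp: attained_def reps_def)
  then obtain opt where opt: "\<forall>t\<in>I. opt t \<in> reps \<and> tnorm t (\<phi> \<circ> opt t) = phi_t \<phi> t \<alpha>"
    by (metis bchoice)
  have "\<exists>a\<in>rep ` G \<union> opt ` F. tnorm t (\<phi> \<circ> a) = phi_t \<phi> t \<alpha>" if t: "t \<in> I" for t
  proof (cases "t \<in> F")
    case True
    then show ?thesis
      using opt t by blast
  next
    case False
    then obtain a where "a \<in> reps" and near: "agrees_near I (\<lambda>s. phi_t \<phi> s \<alpha>) (tnorm_profile I (\<phi> \<circ> a)) t"
      using agrees_near_tnorm_profile_if_standard[OF h Ipos att, of t] t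
      by (auto simp: F_def exceptional_pt_def reps_def)
    then obtain g where g: "g \<in> G" "agrees_near I (\<lambda>s. phi_t \<phi> s \<alpha>) g t"
      using t by (auto simp: G_def)
    have "tnorm t (\<phi> \<circ> rep g) = tnorm_profile I (\<phi> \<circ> rep g) t"
      using t by (simp add: tnorm_profile_def)
    also have "\<dots> = phi_t \<phi> t \<alpha>"
      using rep g agrees_near_at[OF g(2)] by simp
    finally show ?thesis
      using g(1) by blast
  qed
  moreover have "rep ` G \<union> opt ` F \<subseteq> reps"
    using rep opt by (auto simp: F_def)
  moreover have "finite (rep ` G \<union> opt ` F)"
    using \<open>finite G\<close> fin by (simp add: F_def)
  ultimately show ?thesis
    by (intro replacing_set_if_finite_witnesses[where W = "rep ` G \<union> opt ` F"]) (auto simp: reps_def)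
qed

theorem theorem2p2:
  fixes \<phi> :: "'a::{ab_group_add, countable} \<Rightarrow> real"
    and \<alpha> :: 'a
    and I :: "real set"
  assumes "height \<phi>"
    and "open I" and "is_interval I" and "I \<subseteq> {0<..}"
    and "\<forall>t\<in>I. attained \<phi> t \<alpha>"
  shows "((\<exists>X. finite X \<and> X \<noteq> {} \<and> X \<subseteq> realinf \<and>
             (\<forall>t\<in>I. phi_t \<phi> t \<alpha> = Min (tnorm t ` X)))
          \<longleftrightarrow> finite {t \<in> I. exceptional_pt \<phi> \<alpha> I t})
       \<and> (finite {t \<in> I. exceptional_pt \<phi> \<alpha> I t}
          \<longleftrightarrow> (\<exists>R. finite R \<and> 0 \<in> R \<and> replaces_unif \<phi> \<alpha> R I))
       \<and> ((\<exists>R. finite R \<and> 0 \<in> R \<and> replaces_unif \<phi> \<alpha> R I)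
          \<longleftrightarrow> (\<exists>S. 0 \<in> S \<and> finite (\<phi> ` S) \<and> replaces_unif \<phi> \<alpha> S I))"
proof -
  let ?i = "\<exists>X. finite X \<and> X \<noteq> {} \<and> X \<subseteq> realinf \<and> (\<forall>t\<in>I. phi_t \<phi> t \<alpha> = Min (tnorm t ` X))"
  let ?ii = "finite {t \<in> I. exceptional_pt \<phi> \<alpha> I t}"
  let ?iii = "\<exists>R. finite R \<and> 0 \<in> R \<and> replaces_unif \<phi> \<alpha> R I"
  let ?iv = "\<exists>S. 0 \<in> S \<and> finite (\<phi> ` S) \<and> replaces_unif \<phi> \<alpha> S I"
  have "?i \<longrightarrow> ?ii"
    using finite_exceptional_if_phi_t_eq_Min[OF assms(4,2)] by blast
  moreover have "?ii \<longrightarrow> ?iii"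
    using finite_replacing_set_if_finite_exceptional[OF assms(1,3,4,5)] by blast
  moreover have "?iii \<longrightarrow> ?iv"
    by (blast intro: finite_imageI)
  moreover have "?iv \<longrightarrow> ?i"
    using phi_t_eq_Min_if_finite_heights[OF assms(1,4)] by blast
  ultimately show ?thesis
    by argo
qed

end
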